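(* Fix $p\in(0,1)$ and consider the Markov chain $(\eta_t)_{t\ge0}$ on $[0,1]^{\mathbb N}$ described in the context. It has a unique stationary distribution $\pi_p$, and $\pi_p$ is given by $$\pi_p\Big(\eta\in[0,1]^{\mathbb N}:\bigcap_{n=1}^N\{0\le\eta(n)\le u_n\}\Big)=E\Big[\prod_{n=1}^N\Theta_\infty(u_n)\Big]$$ for every $N\in\mathbb N$ and every $(u_1,\dots,u_N)\in[0,1]^N$, where $\Theta_\infty$ is the random function defined in the context.
   Context: The chain: let $(B_t)_{t\ge1}$ be IID Bernoulli($p$) and $(U_t(n))_{t\ge1,n\in\mathbb N}$ IID uniform on $[0,1]$, independent of the $B$'s. For $\eta_t\in[0,1]^{\mathbb N}$, set $\eta_{t+1}(n)=\max(\eta_t(n),U_{t+1}(n))$ for all $n$ if $B_{t+1}=1$ and $\eta_{t+1}(n)=\min(\eta_t(n),U_{t+1}(n))$ for all $n$ if $B_{t+1}=0$. The random function $\Theta_\infty$: let $G_0,G_1,\dots$ be IID with $P(G_0=n)=p^{n-1}(1-p)$, $n\ge1$, let $T_k=G_0+\dots+G_k$, and set $\Theta_\infty(u)=\sum_{k=0}^\infty u^{T_k}\left(\frac{1-u}{u}\right)^k$ for $u\in(0,1)$, $\Theta_\infty(0)=0$, $\Theta_\infty(1)=1$. *)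

theory Defs
  imports "HOL-Probability.Probability"
begin

definition state_space :: "(nat \<Rightarrow> real) measure" where
  "state_space = (\<Pi>\<^sub>M n\<in>(UNIV::nat set). restrict_space borel {0..1::real})"

definition unif_seq :: "(nat \<Rightarrow> real) measure" where
  "unif_seq = (\<Pi>\<^sub>M n\<in>(UNIV::nat set). uniform_measure lborel {0..1::real})"

definition trans_prob :: "real \<Rightarrow> (nat \<Rightarrow> real) \<Rightarrow> (nat \<Rightarrow> real) set \<Rightarrow> ennreal" where
  "trans_prob p \<eta> A =
     ennreal p * emeasure unif_seq {U \<in> space unif_seq. (\<lambda>n. max (\<eta> n) (U n)) \<in> A}
   + ennreal (1 - p) * emeasure unif_seq {U \<in> space unif_seq. (\<lambda>n. min (\<eta> n) (U n)) \<in> A}"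

definition stationary :: "real \<Rightarrow> (nat \<Rightarrow> real) measure \<Rightarrow> bool" where
  "stationary p \<pi> \<longleftrightarrow> prob_space \<pi> \<and> sets \<pi> = sets state_space \<and>
     (\<forall>A \<in> sets state_space. emeasure \<pi> A = (\<integral>\<^sup>+ \<eta>. trans_prob p \<eta> A \<partial>\<pi>))"

text \<open>Law of G: P(G = n) = p^(n-1) (1-p) for n >= 1.\<close>
definition G_pmf :: "real \<Rightarrow> nat pmf" where
  "G_pmf p = map_pmf Suc (geometric_pmf (1 - p))"

definition G_space :: "real \<Rightarrow> (nat \<Rightarrow> nat) measure" where
  "G_space p = (\<Pi>\<^sub>M k\<in>(UNIV::nat set). measure_pmf (G_pmf p))"

definition T_seq :: "(nat \<Rightarrow> nat) \<Rightarrow> nat \<Rightarrow> nat" where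
  "T_seq G k = (\<Sum>i\<le>k. G i)"

definition Theta_inf :: "(nat \<Rightarrow> nat) \<Rightarrow> real \<Rightarrow> real" where
  "Theta_inf G u =
     (if u = 0 then 0 else if u = 1 then 1
      else (\<Sum>k. u ^ T_seq G k * ((1 - u) / u) ^ k))"

end

theory Submission
  imports Defs
begin

(* Let F(u) be the probability, under a stationary law, that eta(n) <= u(n) for all n < N.
   After a max step eta lies in this orthant iff it did before and the fresh uniforms lie below u;
   after a min step eta(n) <= u(n) iff the old value or the fresh uniform is <= u(n). Expanding
   over the set S of coordinates where the uniform exceeds u(n) turns stationarity into the linear
   equation F(u) = p (prod u) F(u) + (1 - p) sum_S w_S(u) F(u on S, 1 off S). It has at most one
   solution: by induction on the number of coordinates with u(n) < 1, everything on the right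
   except c F(u) with c < 1 is already determined. Conditioning on G_0 shows that
   E prod Theta_inf(u(n)) solves the same equation, since G_0 > 1 multiplies Theta_inf(u) by u
   while G_0 = 1 turns it into u + (1 - u) Theta_inf(u) of the shifted sequence. Orthants generate
   the sigma-algebra, so there is at most one stationary law, and one exists by coupling from the
   past: started in 0 further and further in the past, the chain increases to a limit whose law
   is invariant. *)

section \<open>Orthant equation\<close>

definition ones_outside :: "nat set \<Rightarrow> (nat \<Rightarrow> real) \<Rightarrow> nat \<Rightarrow> real" where
  "ones_outside S u = (\<lambda>n. if n \<in> S then u n else 1)"

definition min_step_weight :: "nat \<Rightarrow> (nat \<Rightarrow> real) \<Rightarrow> nat set \<Rightarrow> real" where
  "min_step_weight N u S = (\<Prod>n\<in>{..<N}-S. u n) * (\<Prod>n\<in>S. 1 - u n)"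

lemma prod_min_step_expand:
  fixes u x :: "nat \<Rightarrow> real"
  shows "(\<Prod>n<N. u n + (1 - u n) * x n)
    = (\<Sum>S\<in>Pow {..<N}. min_step_weight N u S * (\<Prod>n<N. ones_outside S x n))"
proof -
  have ones: "(\<Prod>n<N. ones_outside S x n) = (\<Prod>n\<in>S. x n)" if "S \<subseteq> {..<N}" for S
  proof -
    have "(\<Prod>n<N. ones_outside S x n) = (\<Prod>n\<in>{..<N} \<inter> S. x n)"
      unfolding ones_outside_def by (rule prod.inter_restrict[symmetric]) simp
    with that show ?thesis by (simp add: Int_absorb1)
  qed
  have "(\<Prod>n<N. u n + (1 - u n) * x n) = (\<Prod>n<N. (1 - u n) * x n + u n)"
    by (simp add: add.commute)
  also have "\<dots> = (\<Sum>S\<in>Pow {..<N}. (\<Prod>n\<in>S. (1 - u n) * x n) * (\<Prod>n\<in>{..<N}-S. u n))"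
    by (rule prod_add) simp
  also have "\<dots> = (\<Sum>S\<in>Pow {..<N}. min_step_weight N u S * (\<Prod>n<N. ones_outside S x n))"
    by (intro sum.cong refl) (simp add: ones min_step_weight_def prod.distrib)
  finally show ?thesis .
qed

definition orthant_equation :: "real \<Rightarrow> nat \<Rightarrow> ((nat \<Rightarrow> real) \<Rightarrow> real) \<Rightarrow> bool" where
  "orthant_equation p N F \<longleftrightarrow>
     (\<forall>u v. (\<forall>n<N. u n = v n) \<longrightarrow> F u = F v) \<and>
     (\<forall>u. (\<forall>n<N. u n = 1) \<longrightarrow> F u = 1) \<and>
     (\<forall>u. (\<forall>n<N. 0 \<le> u n \<and> u n \<le> 1) \<longrightarrow>
        F u = p * (\<Prod>n<N. u n) * F u
            + (1 - p) * (\<Sum>S\<in>Pow {..<N}. min_step_weight N u S * F (ones_outside S u)))"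

lemma orthant_equationD:
  assumes "orthant_equation p N F"
  shows orthant_equation_cong: "(\<And>n. n < N \<Longrightarrow> u n = v n) \<Longrightarrow> F u = F v"
    and orthant_equation_ones: "(\<And>n. n < N \<Longrightarrow> u n = 1) \<Longrightarrow> F u = 1"
    and orthant_equation_eq: "\<forall>n<N. 0 \<le> u n \<and> u n \<le> 1 \<Longrightarrow>
      F u = p * (\<Prod>n<N. u n) * F u
          + (1 - p) * (\<Sum>S\<in>Pow {..<N}. min_step_weight N u S * F (ones_outside S u))"
  using assms unfolding orthant_equation_def by blast+

lemma orthant_equation_coefficient_less_one:
  fixes p :: real and u :: "nat \<Rightarrow> real"
  assumes p: "0 < p" "p < 1" and u: "\<forall>n<N. 0 \<le> u n \<and> u n \<le> 1"
    and K: "K \<subseteq> {..<N}" "k \<in> K" "u k < 1"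
  shows "p * (\<Prod>n<N. u n) + (1 - p) * (\<Prod>n\<in>K. 1 - u n) < 1"
proof -
  have fin: "finite K" using K(1) finite_subset by blast
  have "(\<Prod>n<N. u n) = u k * (\<Prod>n\<in>{..<N}-{k}. u n)" using K by (subst prod.remove) auto
  also have "\<dots> \<le> u k" using K u by (intro mult_left_le prod_le_1) auto
  finally have "(\<Prod>n<N. u n) \<le> u k" .
  moreover have "(\<Prod>n\<in>K. 1 - u n) = (1 - u k) * (\<Prod>n\<in>K-{k}. 1 - u n)"
    using K fin by (subst prod.remove) auto
  moreover have "\<dots> \<le> 1 - u k" using K u by (intro mult_left_le prod_le_1) auto
  ultimately have "p * (\<Prod>n<N. u n) + (1 - p) * (\<Prod>n\<in>K. 1 - u n) \<le> p * u k + (1 - p) * (1 - u k)"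
    using p by (intro add_mono mult_left_mono) auto
  also have "\<dots> = 1 - p * (1 - u k) - (1 - p) * u k" by (simp add: algebra_simps)
  also have "\<dots> < 1"
  proof -
    have "0 \<le> u k" using K u by auto
    then have "0 < p * (1 - u k)" "0 \<le> (1 - p) * u k" using p K by simp_all
    then show ?thesis by linarith
  qed
  finally show ?thesis .
qed

lemma min_step_weight_eq_0:
  assumes "S \<subseteq> {..<N}" "n \<in> S" "u n = 1"
  shows "min_step_weight N u S = 0"
proof -
  have "(\<Prod>n\<in>S. 1 - u n) = 0" using assms finite_subset[of S "{..<N}"] by (intro prod_zero) auto
  then show ?thesis unfolding min_step_weight_def by simp
qed

lemma min_step_weight_coords_below_one:
  "min_step_weight N u {n. n < N \<and> u n \<noteq> 1} = (\<Prod>n | n < N \<and> u n \<noteq> 1. 1 - u n)"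
  unfolding min_step_weight_def by (subst prod.neutral) auto

lemma orthant_equation_diff:
  assumes F1: "orthant_equation p N F1" and F2: "orthant_equation p N F2"
    and u: "\<forall>n<N. 0 \<le> u n \<and> u n \<le> 1"
  shows "F1 u - F2 u = p * (\<Prod>n<N. u n) * (F1 u - F2 u)
    + (1 - p) * (\<Sum>S\<in>Pow {..<N}. min_step_weight N u S * (F1 (ones_outside S u) - F2 (ones_outside S u)))"
proof -
  have "(\<Sum>S\<in>Pow {..<N}. min_step_weight N u S * (F1 (ones_outside S u) - F2 (ones_outside S u)))
      = (\<Sum>S\<in>Pow {..<N}. min_step_weight N u S * F1 (ones_outside S u))
      - (\<Sum>S\<in>Pow {..<N}. min_step_weight N u S * F2 (ones_outside S u))"
    by (simp add: sum_subtractf right_diff_distrib)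
  then show ?thesis using orthant_equation_eq[OF F1 u] orthant_equation_eq[OF F2 u] by algebra
qed

text \<open>Induction on the set \<open>K\<close> of coordinates with \<open>u n < 1\<close>: in the equation for the difference
  of two solutions, the terms with \<open>S \<subset> K\<close> vanish by induction, those with \<open>S \<not>\<subseteq> K\<close> have weight
  \<open>0\<close>, and the term with \<open>S = K\<close> is again the difference at \<open>u\<close>.\<close>
lemma orthant_equation_unique:
  fixes p :: real
  assumes p: "0 < p" "p < 1" and F1: "orthant_equation p N F1" and F2: "orthant_equation p N F2"
    and u: "\<forall>n<N. 0 \<le> u n \<and> u n \<le> 1"
  shows "F1 u = F2 u"
  using u
proof (induction "card {n. n < N \<and> u n \<noteq> 1}" arbitrary: u rule: less_induct)
  case (less u)
  define K where "K = {n. n < N \<and> u n \<noteq> 1}"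
  define D where "D v = F1 v - F2 v" for v
  have K: "K \<subseteq> {..<N}" "finite K" unfolding K_def by auto
  show ?case
  proof (cases "K = {}")
    case True
    then have "\<And>n. n < N \<Longrightarrow> u n = 1" unfolding K_def by auto
    then show ?thesis using orthant_equation_ones[OF F1] orthant_equation_ones[OF F2] by metis
  next
    case False
    then obtain k where k: "k \<in> K" by auto
    have vanish: "min_step_weight N u S * D (ones_outside S u) = 0" if S: "S \<subseteq> {..<N}" "S \<noteq> K" for S
    proof (cases "S \<subseteq> K")
      case True
      then have "card S < card K" using S K by (intro psubset_card_mono) auto
      moreover have "{n. n < N \<and> ones_outside S u n \<noteq> 1} = S"
        using True unfolding ones_outside_def K_def by auto
      moreover have "\<forall>n<N. 0 \<le> ones_outside S u n \<and> ones_outside S u n \<le> 1"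
        using less.prems unfolding ones_outside_def by auto
      ultimately have "F1 (ones_outside S u) = F2 (ones_outside S u)"
        by (intro less.hyps) (simp_all add: K_def)
      then show ?thesis unfolding D_def by simp
    next
      case False
      then obtain n where "n \<in> S" "u n = 1" using S unfolding K_def by auto
      then show ?thesis using min_step_weight_eq_0[OF S(1)] by simp
    qed
    have "\<And>n. n < N \<Longrightarrow> ones_outside K u n = u n" unfolding ones_outside_def K_def by auto
    then have "D (ones_outside K u) = D u"
      unfolding D_def using orthant_equation_cong[OF F1] orthant_equation_cong[OF F2] by metis
    then have sum: "(\<Sum>S\<in>Pow {..<N}. min_step_weight N u S * D (ones_outside S u))
        = (\<Prod>n\<in>K. 1 - u n) * D u"
      using K unfolding K_def min_step_weight_coords_below_one[symmetric]
      by (subst sum.remove[of _ K]) (auto simp: K_def intro!: sum.neutral vanish)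
    have "D u = p * (\<Prod>n<N. u n) * D u
        + (1 - p) * (\<Sum>S\<in>Pow {..<N}. min_step_weight N u S * D (ones_outside S u))"
      unfolding D_def by (rule orthant_equation_diff[OF F1 F2 less.prems])
    then have "D u = (p * (\<Prod>n<N. u n) + (1 - p) * (\<Prod>n\<in>K. 1 - u n)) * D u"
      unfolding sum by (simp add: algebra_simps)
    moreover have "p * (\<Prod>n<N. u n) + (1 - p) * (\<Prod>n\<in>K. 1 - u n) < 1"
    proof (rule orthant_equation_coefficient_less_one[OF p less.prems K(1) k])
      show "u k < 1" using k less.prems unfolding K_def by force
    qed
    ultimately have "D u = 0" by (metis less_irrefl mult_cancel_right2)
    then show ?thesis unfolding D_def by simp
  qed
qed

section \<open>Orthants of the state space\<close>

lemma space_state_space: "space state_space = {\<eta>. \<forall>n. 0 \<le> \<eta> n \<and> \<eta> n \<le> 1}"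
  unfolding state_space_def by (auto simp: space_PiM space_restrict_space PiE_def extensional_def)

definition orthant :: "nat \<Rightarrow> (nat \<Rightarrow> real) \<Rightarrow> (nat \<Rightarrow> real) set" where
  "orthant N u = {\<eta> \<in> space state_space. \<forall>n<N. 0 \<le> \<eta> n \<and> \<eta> n \<le> u n}"

lemma orthant_zero: "orthant 0 u = space state_space"
  unfolding orthant_def by simp

lemma sets_orthant[measurable]: "orthant N u \<in> sets state_space"
proof -
  have "orthant N u = {\<eta> \<in> space state_space. \<forall>n\<in>{..<N}. \<eta> n \<in> {0..u n}}"
    unfolding orthant_def by auto
  also have "\<dots> \<in> sets state_space"
    unfolding state_space_def
    by (intro sets.sets_Collect_finite_All sets_Collect_single')
       (auto simp: sets_restrict_space_iff space_restrict_space)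
  finally show ?thesis .
qed

definition unit_orthants :: "(nat \<Rightarrow> real) set set" where
  "unit_orthants = {orthant N u | N u. \<forall>n<N. 0 \<le> u n \<and> u n \<le> 1}"

lemma Int_stable_unit_orthants: "Int_stable unit_orthants"
proof (rule Int_stableI)
  fix A B assume "A \<in> unit_orthants" "B \<in> unit_orthants"
  then obtain N u M v where AB: "A = orthant N u" "B = orthant M v"
    and uv: "\<forall>n<N. 0 \<le> u n \<and> u n \<le> 1" "\<forall>n<M. 0 \<le> v n \<and> v n \<le> 1"
    unfolding unit_orthants_def by auto
  define w where "w n = min (if n < N then u n else 1) (if n < M then v n else 1)" for n
  have "A \<inter> B = orthant (max N M) w" unfolding AB orthant_def w_def space_state_space by auto
  moreover have "\<forall>n<max N M. 0 \<le> w n \<and> w n \<le> 1" using uv unfolding w_def by auto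
  ultimately show "A \<inter> B \<in> unit_orthants" unfolding unit_orthants_def by blast
qed

lemma sets_state_space_sigma_unit_orthants:
  "sets state_space = sigma_sets (space state_space) unit_orthants"
proof
  show "sigma_sets (space state_space) unit_orthants \<subseteq> sets state_space"
    using sets_orthant unfolding unit_orthants_def by (intro sets.sigma_sets_subset) blast
next
  define M where "M = sigma (space state_space) unit_orthants"
  have unit_orthants_Pow: "unit_orthants \<subseteq> Pow (space state_space)"
    unfolding unit_orthants_def orthant_def by auto
  have space_M: "space M = space state_space"
    and sets_M: "sets M = sigma_sets (space state_space) unit_orthants"
    unfolding M_def using unit_orthants_Pow by simp_all
  have coordinate: "(\<lambda>\<eta>. \<eta> i) \<in> borel_measurable M" for i
    unfolding borel_measurable_iff_le
  proof
    fix a :: real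
    show "{\<eta> \<in> space M. \<eta> i \<le> a} \<in> sets M"
    proof (cases "a < 0")
      case True
      have "\<not> \<eta> i \<le> a" if "\<eta> \<in> space M" for \<eta>
        using that True unfolding space_M space_state_space by (auto dest!: spec[of _ i])
      then have "{\<eta> \<in> space M. \<eta> i \<le> a} = {}" by blast
      then show ?thesis by (metis sets.empty_sets)
    next
      case False
      define v where "v n = (if n = i then min a 1 else 1)" for n
      have "\<forall>n<Suc i. 0 \<le> v n \<and> v n \<le> 1" using False by (simp add: v_def)
      then have "orthant (Suc i) v \<in> sets M"
        unfolding sets_M unit_orthants_def by (blast intro: sigma_sets.Basic)
      moreover have "{\<eta> \<in> space M. \<eta> i \<le> a} = orthant (Suc i) v"
        unfolding space_M space_state_space orthant_def v_def by auto
      ultimately show ?thesis by simp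
    qed
  qed
  have "(\<lambda>\<eta>. \<eta>) \<in> measurable M state_space"
    unfolding state_space_def
    by (rule measurable_PiM_single'[where f="\<lambda>i \<eta>. \<eta> i", simplified], rule measurable_restrict_space2)
       (use coordinate space_M in \<open>auto simp: space_state_space space_restrict_space\<close>)
  show "sets state_space \<subseteq> sigma_sets (space state_space) unit_orthants"
  proof
    fix A assume A: "A \<in> sets state_space"
    have "(\<lambda>\<eta>. \<eta>) -` A \<inter> space M = A" using sets.sets_into_space[OF A] space_M by auto
    with measurable_sets[OF \<open>_ \<in> measurable M state_space\<close> A]
    show "A \<in> sigma_sets (space state_space) unit_orthants" using sets_M by simp
  qed
qed

lemma measure_eqI_unit_orthants:
  assumes "prob_space M1" "prob_space M2" "sets M1 = sets state_space" "sets M2 = sets state_space"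
    and eq: "\<And>N u. \<forall>n<N. 0 \<le> u n \<and> u n \<le> 1 \<Longrightarrow> measure M1 (orthant N u) = measure M2 (orthant N u)"
  shows "M1 = M2"
proof -
  interpret M1: prob_space M1 by fact
  interpret M2: prob_space M2 by fact
  show ?thesis
  proof (rule measure_eqI_generator_eq_countable[OF Int_stable_unit_orthants])
    show "unit_orthants \<subseteq> Pow (space state_space)"
      unfolding unit_orthants_def orthant_def by auto
    show "emeasure M1 X = emeasure M2 X" if "X \<in> unit_orthants" for X
      using that eq unfolding unit_orthants_def
      by (auto simp: M1.emeasure_eq_measure M2.emeasure_eq_measure)
    show "sets M1 = sigma_sets (space state_space) unit_orthants"
      "sets M2 = sigma_sets (space state_space) unit_orthants"
      using assms(3,4) sets_state_space_sigma_unit_orthants by simp_all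
    show "{space state_space} \<subseteq> unit_orthants"
      unfolding unit_orthants_def using orthant_zero by blast
    show "emeasure M1 A \<noteq> \<infinity>" for A
      by simp
  qed auto
qed

section \<open>One step of the chain on orthants\<close>

definition uniform01 :: "real measure" where
  "uniform01 = uniform_measure lborel {0..1}"

lemma prob_space_uniform01: "prob_space uniform01"
  unfolding uniform01_def by (rule prob_space_uniform_measure) auto

lemma unif_seq_eq_PiM_uniform01: "unif_seq = (\<Pi>\<^sub>M n\<in>UNIV. uniform01)"
  unfolding unif_seq_def uniform01_def ..

interpretation uniform_seq: product_prob_space "\<lambda>_. uniform01" "UNIV :: nat set"
  by (simp add: product_prob_space_def product_sigma_finite_def product_prob_space_axioms_def
      prob_space_uniform01 prob_space_imp_sigma_finite)

lemma AE_unif_seq_unit_interval: "AE U in unif_seq. \<forall>n. 0 \<le> U n \<and> U n \<le> 1"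
proof -
  have "AE x in uniform01. 0 \<le> x \<and> x \<le> 1"
    unfolding uniform01_def by (rule AE_uniform_measureI) auto
  then have "AE U in unif_seq. 0 \<le> U n \<and> U n \<le> 1" for n
    unfolding unif_seq_eq_PiM_uniform01 by (intro uniform_seq.AE_component) auto
  then show ?thesis by (simp add: AE_all_countable)
qed

definition step_coord :: "bool \<Rightarrow> real \<Rightarrow> real \<Rightarrow> real" where
  "step_coord b a x = (if b then max a x else min a x)"

lemma emeasure_uniform01_step_coord_le:
  assumes "0 \<le> c" "c \<le> 1"
  shows "emeasure uniform01 {x. step_coord b a x \<le> c}
    = ennreal (if b then (if a \<le> c then c else 0) else (if a \<le> c then 1 else c))"
proof -
  have atMost: "emeasure uniform01 {..c} = ennreal c"
    using assms unfolding uniform01_def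
    by (subst emeasure_uniform_measure) (auto simp: Int_atMost divide_ennreal_def)
  have UNIV: "emeasure uniform01 UNIV = 1"
    using prob_space.emeasure_space_1[OF prob_space_uniform01] by (simp add: uniform01_def)
  have "{x. step_coord b a x \<le> c} =
      (if b then (if a \<le> c then {..c} else {}) else (if a \<le> c then UNIV else {..c}))"
    unfolding step_coord_def by auto
  then show ?thesis using atMost UNIV by simp
qed

lemma emeasure_step_coord_orthant:
  assumes \<eta>: "\<eta> \<in> space state_space" and u: "\<forall>n<N. 0 \<le> u n \<and> u n \<le> 1"
  shows "emeasure unif_seq {U \<in> space unif_seq. (\<lambda>n. step_coord b (\<eta> n) (U n)) \<in> orthant N u}
    = (\<Prod>n<N. emeasure uniform01 {x. step_coord b (\<eta> n) x \<le> u n})"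
proof -
  have \<eta>_unit: "0 \<le> \<eta> n \<and> \<eta> n \<le> 1" for n using \<eta> unfolding space_state_space by auto
  have "emeasure unif_seq {U \<in> space unif_seq. (\<lambda>n. step_coord b (\<eta> n) (U n)) \<in> orthant N u}
      = emeasure unif_seq {U \<in> space unif_seq. \<forall>n\<in>{..<N}. U n \<in> {x. step_coord b (\<eta> n) x \<le> u n}}"
  proof (rule emeasure_eq_AE)
    show "AE U in unif_seq. (U \<in> {U \<in> space unif_seq. (\<lambda>n. step_coord b (\<eta> n) (U n)) \<in> orthant N u})
        = (U \<in> {U \<in> space unif_seq. \<forall>n\<in>{..<N}. U n \<in> {x. step_coord b (\<eta> n) x \<le> u n}})"
      using AE_unif_seq_unit_interval
    proof eventually_elim
      case (elim U)
      then have "0 \<le> step_coord b (\<eta> n) (U n) \<and> step_coord b (\<eta> n) (U n) \<le> 1" for n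
        using \<eta>_unit[of n] unfolding step_coord_def by auto
      then show ?case unfolding orthant_def space_state_space by auto
    qed
    have "{U \<in> space unif_seq. (\<lambda>n. step_coord b (\<eta> n) (U n)) \<in> orthant N u}
        = {U \<in> space unif_seq. \<forall>n. 0 \<le> step_coord b (\<eta> n) (U n) \<and> step_coord b (\<eta> n) (U n) \<le> 1
            \<and> (n < N \<longrightarrow> step_coord b (\<eta> n) (U n) \<le> u n)}"
      unfolding orthant_def space_state_space by auto
    also have "\<dots> \<in> sets unif_seq"
      unfolding unif_seq_eq_PiM_uniform01 step_coord_def by measurable (auto simp: uniform01_def)
    finally show "{U \<in> space unif_seq. (\<lambda>n. step_coord b (\<eta> n) (U n)) \<in> orthant N u} \<in> sets unif_seq" .
    show "{U \<in> space unif_seq. \<forall>n\<in>{..<N}. U n \<in> {x. step_coord b (\<eta> n) x \<le> u n}} \<in> sets unif_seq"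
      unfolding unif_seq_eq_PiM_uniform01 step_coord_def by measurable (auto simp: uniform01_def)
  qed
  also have "\<dots> = (\<Prod>n<N. emeasure uniform01 {x. step_coord b (\<eta> n) x \<le> u n})"
    unfolding unif_seq_eq_PiM_uniform01 step_coord_def
    by (subst uniform_seq.emeasure_PiM_Collect) (auto simp: uniform01_def)
  finally show ?thesis .
qed

lemma prod_max_step_indicator:
  assumes "\<eta> \<in> space state_space"
  shows "(\<Prod>n<N. if \<eta> n \<le> u n then u n else 0) = (\<Prod>n<N. u n) * indicator (orthant N u) \<eta>"
  using assms unfolding orthant_def space_state_space
  by (auto simp: indicator_def prod.distrib[symmetric] intro!: prod.cong)

lemma indicator_orthant_ones_outside:
  assumes "\<eta> \<in> space state_space"
  shows "indicator (orthant N (ones_outside S u)) \<eta>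
    = (\<Prod>n<N. ones_outside S (\<lambda>n. indicator {..u n} (\<eta> n)) n :: real)"
proof (cases "\<forall>n<N. n \<in> S \<longrightarrow> \<eta> n \<le> u n")
  case True
  then have "\<eta> \<in> orthant N (ones_outside S u)"
    using assms unfolding orthant_def space_state_space ones_outside_def by auto
  with True show ?thesis by (auto simp: ones_outside_def intro!: prod.neutral)
next
  case False
  then obtain k where "k < N" "k \<in> S" "\<not> \<eta> k \<le> u k" by blast
  moreover from this have "\<eta> \<notin> orthant N (ones_outside S u)"
    unfolding orthant_def ones_outside_def by auto
  ultimately show ?thesis by (auto simp: ones_outside_def intro!: prod_zero[symmetric] bexI[of _ k])
qed

text \<open>In the expansion, \<open>S\<close> is the set of coordinates on which the fresh uniform exceeds \<open>u n\<close>,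
  so that the old value must already lie below \<open>u n\<close>.\<close>
lemma prod_min_step_indicator:
  assumes "\<eta> \<in> space state_space"
  shows "(\<Prod>n<N. if \<eta> n \<le> u n then 1 else u n)
    = (\<Sum>S\<in>Pow {..<N}. min_step_weight N u S * indicator (orthant N (ones_outside S u)) \<eta>)"
proof -
  have "(\<Prod>n<N. if \<eta> n \<le> u n then 1 else u n) = (\<Prod>n<N. u n + (1 - u n) * indicator {..u n} (\<eta> n))"
    by (intro prod.cong) (auto simp: indicator_def)
  then show ?thesis
    unfolding prod_min_step_expand indicator_orthant_ones_outside[OF assms] .
qed

lemma min_step_weight_nonneg:
  "\<forall>n<N. 0 \<le> u n \<and> u n \<le> 1 \<Longrightarrow> S \<subseteq> {..<N} \<Longrightarrow> 0 \<le> min_step_weight N u S"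
  unfolding min_step_weight_def by (auto intro!: mult_nonneg_nonneg prod_nonneg)

lemma trans_prob_orthant:
  assumes \<eta>: "\<eta> \<in> space state_space" and u: "\<forall>n<N. 0 \<le> u n \<and> u n \<le> 1" and p: "0 \<le> p" "p \<le> 1"
  shows "trans_prob p \<eta> (orthant N u) = ennreal
    (p * (\<Prod>n<N. u n) * indicator (orthant N u) \<eta>
      + (1 - p) * (\<Sum>S\<in>Pow {..<N}. min_step_weight N u S * indicator (orthant N (ones_outside S u)) \<eta>))"
proof -
  have step: "emeasure unif_seq {U \<in> space unif_seq. (\<lambda>n. step_coord b (\<eta> n) (U n)) \<in> orthant N u}
      = ennreal (\<Prod>n<N. if b then (if \<eta> n \<le> u n then u n else 0) else (if \<eta> n \<le> u n then 1 else u n))"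
    for b
    using u
    by (simp add: emeasure_step_coord_orthant[OF \<eta> u] emeasure_uniform01_step_coord_le)
       (subst prod_ennreal; auto)
  have max_min_eq: "(\<lambda>n. max (\<eta> n) (U n)) = (\<lambda>n. step_coord True (\<eta> n) (U n))"
    "(\<lambda>n. min (\<eta> n) (U n)) = (\<lambda>n. step_coord False (\<eta> n) (U n))" for U
    unfolding step_coord_def by simp_all
  have "trans_prob p \<eta> (orthant N u) = ennreal p * ennreal ((\<Prod>n<N. u n) * indicator (orthant N u) \<eta>)
      + ennreal (1 - p) * ennreal (\<Sum>S\<in>Pow {..<N}.
          min_step_weight N u S * indicator (orthant N (ones_outside S u)) \<eta>)"
    unfolding trans_prob_def max_min_eq step[of True] step[of False]
    by (simp add: prod_max_step_indicator[OF \<eta>] prod_min_step_indicator[OF \<eta>])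
  moreover have "0 \<le> (\<Prod>n<N. u n) * indicator (orthant N u) \<eta>"
    "0 \<le> (\<Sum>S\<in>Pow {..<N}. min_step_weight N u S * indicator (orthant N (ones_outside S u)) \<eta>)"
    using u by (auto intro!: prod_nonneg sum_nonneg mult_nonneg_nonneg min_step_weight_nonneg)
  ultimately show ?thesis
    using p by (simp add: ennreal_mult[symmetric] ennreal_plus[symmetric] mult.assoc del: ennreal_plus)
qed

lemma measure_eq_integral_stationary:
  assumes st: "stationary p \<pi>" and A: "A \<in> sets state_space" and f: "integrable \<pi> f"
    and f_trans: "\<And>\<eta>. \<eta> \<in> space state_space \<Longrightarrow> 0 \<le> f \<eta> \<and> trans_prob p \<eta> A = ennreal (f \<eta>)"
  shows "measure \<pi> A = (\<integral>\<eta>. f \<eta> \<partial>\<pi>)"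
proof -
  interpret prob_space \<pi> using st by (simp add: stationary_def)
  have "sets \<pi> = sets state_space" using st by (simp add: stationary_def)
  then have space_\<pi>: "space \<pi> = space state_space" by (rule sets_eq_imp_space_eq)
  have "emeasure \<pi> A = (\<integral>\<^sup>+\<eta>. trans_prob p \<eta> A \<partial>\<pi>)" using st A by (simp add: stationary_def)
  also have "\<dots> = (\<integral>\<^sup>+\<eta>. ennreal (f \<eta>) \<partial>\<pi>)"
    using f_trans by (intro nn_integral_cong) (simp add: space_\<pi>)
  also have "\<dots> = ennreal (\<integral>\<eta>. f \<eta> \<partial>\<pi>)"
    using f f_trans by (intro nn_integral_eq_integral) (auto simp: space_\<pi>)
  moreover have "0 \<le> (\<integral>\<eta>. f \<eta> \<partial>\<pi>)"
    using f_trans by (intro Bochner_Integration.integral_nonneg) (simp add: space_\<pi>)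
  ultimately show ?thesis by (simp add: emeasure_eq_measure)
qed

lemma measure_orthant_stationary:
  assumes st: "stationary p \<pi>" and p: "0 \<le> p" "p \<le> 1" and u: "\<forall>n<N. 0 \<le> u n \<and> u n \<le> 1"
  shows "measure \<pi> (orthant N u) = p * (\<Prod>n<N. u n) * measure \<pi> (orthant N u)
    + (1 - p) * (\<Sum>S\<in>Pow {..<N}. min_step_weight N u S * measure \<pi> (orthant N (ones_outside S u)))"
proof -
  interpret prob_space \<pi> using st by (simp add: stationary_def)
  have orthant_in_sets: "orthant N v \<in> sets \<pi>" for v
    using st by (simp add: stationary_def)
  have integrable_orthant: "integrable \<pi> (indicator (orthant N v) :: _ \<Rightarrow> real)" for v
    using orthant_in_sets by (simp add: less_top[symmetric])
  have orthant_Int_space: "orthant N v \<inter> space \<pi> = orthant N v" for v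
    using sets.sets_into_space[OF orthant_in_sets] by blast
  define f where "f \<eta> = p * (\<Prod>n<N. u n) * indicator (orthant N u) \<eta>
    + (1 - p) * (\<Sum>S\<in>Pow {..<N}. min_step_weight N u S * indicator (orthant N (ones_outside S u)) \<eta>)"
    for \<eta>
  have "measure \<pi> (orthant N u) = (\<integral>\<eta>. f \<eta> \<partial>\<pi>)"
  proof (rule measure_eq_integral_stationary[OF st sets_orthant])
    show "integrable \<pi> f"
      unfolding f_def
      by (intro integrable_orthant Bochner_Integration.integrable_add
          Bochner_Integration.integrable_mult_right Bochner_Integration.integrable_sum)
    show "0 \<le> f \<eta> \<and> trans_prob p \<eta> (orthant N u) = ennreal (f \<eta>)" if "\<eta> \<in> space state_space" for \<eta>
      using u p that unfolding f_def
      by (auto simp: trans_prob_orthant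
          intro!: add_nonneg_nonneg mult_nonneg_nonneg prod_nonneg sum_nonneg min_step_weight_nonneg)
  qed
  also have "\<dots> = p * (\<Prod>n<N. u n) * measure \<pi> (orthant N u)
      + (1 - p) * (\<Sum>S\<in>Pow {..<N}. min_step_weight N u S * measure \<pi> (orthant N (ones_outside S u)))"
    unfolding f_def
    by (simp add: integrable_orthant orthant_Int_space Bochner_Integration.integral_sum
        Bochner_Integration.integrable_mult_right del: sum_mult_indicator)
  finally show ?thesis .
qed

lemma stationary_orthant_equation:
  assumes st: "stationary p \<pi>" and p: "0 \<le> p" "p \<le> 1"
  shows "orthant_equation p N (\<lambda>u. measure \<pi> (orthant N u))"
  unfolding orthant_equation_def
proof (intro conjI allI impI)
  fix u v :: "nat \<Rightarrow> real"
  assume "\<forall>n<N. u n = v n"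
  then have "orthant N u = orthant N v" unfolding orthant_def by auto
  then show "measure \<pi> (orthant N u) = measure \<pi> (orthant N v)" by simp
next
  fix u :: "nat \<Rightarrow> real"
  assume "\<forall>n<N. u n = 1"
  then have "orthant N u = space state_space" unfolding orthant_def space_state_space by auto
  then show "measure \<pi> (orthant N u) = 1"
    using st unfolding stationary_def by (metis prob_space.prob_space sets_eq_imp_space_eq)
qed (rule measure_orthant_stationary[OF st p])

section \<open>The random function \<open>\<Theta>\<^sub>\<infinity>\<close>\<close>

lemma T_seq_ge:
  assumes "\<forall>i. 0 < G i"
  shows "Suc k \<le> T_seq G k"
proof (induction k)
  case 0
  then show ?case using assms by (simp add: T_seq_def Suc_le_eq)
next
  case (Suc k)
  then show ?case using assms[rule_format, of "Suc k"] by (simp add: T_seq_def)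
qed

lemma Theta_inf_eq_suminf:
  "0 < u \<Longrightarrow> u < 1 \<Longrightarrow> Theta_inf G u = (\<Sum>k. u ^ T_seq G k * ((1 - u) / u) ^ k)"
  unfolding Theta_inf_def by simp

lemma Theta_inf_term_bounds:
  fixes u :: real
  assumes G: "\<forall>i. 0 < G i" and u: "0 < u" "u < 1"
  shows "0 \<le> u ^ T_seq G k * ((1 - u) / u) ^ k" "u ^ T_seq G k * ((1 - u) / u) ^ k \<le> u * (1 - u) ^ k"
proof -
  show "0 \<le> u ^ T_seq G k * ((1 - u) / u) ^ k" using u by simp
  have "u ^ T_seq G k \<le> u ^ Suc k" using T_seq_ge[OF G] u by (intro power_decreasing) auto
  then have "u ^ T_seq G k * ((1 - u) / u) ^ k \<le> u ^ Suc k * ((1 - u) / u) ^ k"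
    using u by (intro mult_right_mono) auto
  also have "\<dots> = u * (1 - u) ^ k" using u by (simp add: power_divide field_simps)
  finally show "u ^ T_seq G k * ((1 - u) / u) ^ k \<le> u * (1 - u) ^ k" .
qed

lemma sums_geometric_weights:
  fixes u :: real
  assumes "0 < u" "u < 1"
  shows "(\<lambda>k. u * (1 - u) ^ k) sums 1"
proof -
  have "(\<lambda>k. (1 - u) ^ k) sums (1 / (1 - (1 - u)))" using assms by (intro geometric_sums) auto
  from sums_mult[OF this, of u] show ?thesis using assms by simp
qed

lemma summable_Theta_inf_terms:
  fixes u :: real
  assumes G: "\<forall>i. 0 < G i" and u: "0 < u" "u < 1"
  shows "summable (\<lambda>k. u ^ T_seq G k * ((1 - u) / u) ^ k)"
proof (rule summable_comparison_test')
  show "summable (\<lambda>k. u * (1 - u) ^ k)" using sums_geometric_weights[OF u] by (rule sums_summable)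
  show "norm (u ^ T_seq G k * ((1 - u) / u) ^ k) \<le> u * (1 - u) ^ k" for k
    using Theta_inf_term_bounds[OF G u, of k] by simp
qed

lemma Theta_inf_bounds:
  assumes G: "\<forall>i. 0 < G i" and u: "0 \<le> u" "u \<le> 1"
  shows "0 \<le> Theta_inf G u \<and> Theta_inf G u \<le> 1"
proof (cases "u = 0 \<or> u = 1")
  case True
  then show ?thesis by (auto simp: Theta_inf_def)
next
  case False
  with u have u: "0 < u" "u < 1" by auto
  note terms = Theta_inf_term_bounds[OF G u] summable_Theta_inf_terms[OF G u]
  have "0 \<le> Theta_inf G u"
    unfolding Theta_inf_eq_suminf[OF u] using terms by (intro suminf_nonneg) auto
  moreover have "Theta_inf G u \<le> (\<Sum>k. u * (1 - u) ^ k)"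
    unfolding Theta_inf_eq_suminf[OF u]
    using terms sums_summable[OF sums_geometric_weights[OF u]] by (intro suminf_le) auto
  ultimately show ?thesis using sums_unique[OF sums_geometric_weights[OF u]] by simp
qed

lemma Theta_inf_Suc_head:
  assumes G: "\<forall>i. 0 < G i" and u: "0 \<le> u" "u \<le> 1"
  shows "Theta_inf (G(0 := Suc (G 0))) u = u * Theta_inf G u"
proof (cases "u = 0 \<or> u = 1")
  case True
  then show ?thesis by (auto simp: Theta_inf_def)
next
  case False
  with u have u: "0 < u" "u < 1" by auto
  have "T_seq (G(0 := Suc (G 0))) k = Suc (T_seq G k)" for k
    unfolding T_seq_def by (induction k) auto
  then show ?thesis
    using suminf_mult[OF summable_Theta_inf_terms[OF G u], of u]
    by (simp add: Theta_inf_eq_suminf[OF u] mult.assoc)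
qed

lemma Theta_inf_cons_one:
  assumes G: "\<forall>i. 0 < G i" and u: "0 \<le> u" "u \<le> 1"
  shows "Theta_inf (case_nat 1 G) u = u + (1 - u) * Theta_inf G u"
proof (cases "u = 0 \<or> u = 1")
  case True
  then show ?thesis by (auto simp: Theta_inf_def)
next
  case False
  with u have u: "0 < u" "u < 1" by auto
  define t where "t H k = u ^ T_seq H k * ((1 - u) / u) ^ k" for H k
  have G1: "\<forall>i. 0 < case_nat 1 G i" using G by (simp split: nat.split)
  have T_seq_cons: "T_seq (case_nat 1 G) 0 = 1" "T_seq (case_nat 1 G) (Suc k) = Suc (T_seq G k)" for k
    by (simp_all only: T_seq_def sum.atMost_Suc_shift) simp_all
  have summable_t: "summable (t H)" if "\<forall>i. 0 < H i" for H
    using summable_Theta_inf_terms[OF that u] unfolding t_def .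
  have split_head: "(\<Sum>k. t H k) = t H 0 + (\<Sum>k. t H (Suc k))" if "summable (t H)" for H
    using suminf_split_head[OF that] by simp
  have "(\<Sum>k. t (case_nat 1 G) k) = t (case_nat 1 G) 0 + (\<Sum>k. t (case_nat 1 G) (Suc k))"
    by (rule split_head[OF summable_t[OF G1]])
  also have "(\<lambda>k. t (case_nat 1 G) (Suc k)) = (\<lambda>k. (1 - u) * t G k)"
    unfolding t_def T_seq_cons using u by (auto simp: field_simps)
  also have "(\<Sum>k. (1 - u) * t G k) = (1 - u) * (\<Sum>k. t G k)"
    by (rule suminf_mult[OF summable_t[OF G]])
  finally show ?thesis
    unfolding Theta_inf_eq_suminf[OF u] t_def T_seq_cons by simp
qed

section \<open>Conditioning on the first geometric variable\<close>

lemma (in sequence_space) nn_integral_split_head: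
  assumes [measurable]: "g \<in> borel_measurable S"
  shows "(\<integral>\<^sup>+\<omega>. g \<omega> \<partial>S) = (\<integral>\<^sup>+\<omega>. \<integral>\<^sup>+s. g (case_nat s \<omega>) \<partial>M \<partial>S)"
proof -
  interpret pair_sigma_finite M S
    by (simp add: pair_sigma_finite_def prob_space_imp_sigma_finite
        M.prob_space_axioms P.prob_space_axioms)
  have "(\<integral>\<^sup>+\<omega>. g \<omega> \<partial>S) = (\<integral>\<^sup>+\<omega>. g \<omega> \<partial>distr (M \<Otimes>\<^sub>M S) S (\<lambda>(s, \<omega>). case_nat s \<omega>))"
    by (simp add: PiM_iter)
  also have "\<dots> = (\<integral>\<^sup>+x. g (case_prod case_nat x) \<partial>(M \<Otimes>\<^sub>M S))"
    by (intro nn_integral_distr) auto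
  also have "\<dots> = (\<integral>\<^sup>+\<omega>. \<integral>\<^sup>+s. g (case_nat s \<omega>) \<partial>M \<partial>S)"
    by (subst nn_integral_snd[symmetric]) (auto simp: case_prod_beta')
  finally show ?thesis .
qed

lemma sequence_space_G_pmf: "sequence_space (measure_pmf (G_pmf p))"
  by (simp add: sequence_space_def product_prob_space_def product_sigma_finite_def
      prob_space_imp_sigma_finite measure_pmf.prob_space_axioms product_prob_space_axioms_def)

lemma prob_space_G_space: "prob_space (G_space p)"
  unfolding G_space_def by (rule prob_space_PiM) (rule measure_pmf.prob_space_axioms)

lemma AE_G_space_pos: "AE G in G_space p. \<forall>i. 0 < G i"
proof -
  have "AE n in measure_pmf (G_pmf p). 0 < n" by (auto simp: AE_measure_pmf_iff G_pmf_def)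
  then have "AE G in G_space p. 0 < G i" for i
    unfolding G_space_def by (intro AE_PiM_component) (auto intro: measure_pmf.prob_space_axioms)
  then show ?thesis by (simp add: AE_all_countable)
qed

lemma nn_integral_G_pmf:
  assumes p: "0 \<le> p" "p < 1"
  shows "(\<integral>\<^sup>+s. h s \<partial>G_pmf p) = ennreal p * (\<integral>\<^sup>+s. h (Suc s) \<partial>G_pmf p) + ennreal (1 - p) * h 1"
proof -
  have "(\<integral>\<^sup>+s. h s \<partial>G_pmf p) = (\<integral>\<^sup>+n. h (Suc n) \<partial>geometric_pmf (1 - p))"
    unfolding G_pmf_def by (rule nn_integral_map_pmf)
  also have "\<dots> = (\<integral>\<^sup>+n. h (Suc n) \<partial>measure_pmf (bind_pmf (bernoulli_pmf (1 - p))
      (\<lambda>b. if b then return_pmf 0 else map_pmf Suc (geometric_pmf (1 - p)))))"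
    using p by (subst geometric_bind_pmf_unfold[of "1 - p"]) auto
  also have "\<dots> = ennreal (1 - p) * h 1 + ennreal p * (\<integral>\<^sup>+n. h (Suc (Suc n)) \<partial>geometric_pmf (1 - p))"
    using p by (simp add: nn_integral_bind_pmf nn_integral_bernoulli_pmf nn_integral_map_pmf
        nn_integral_return_pmf mult.commute)
  also have "(\<integral>\<^sup>+n. h (Suc (Suc n)) \<partial>geometric_pmf (1 - p)) = (\<integral>\<^sup>+s. h (Suc s) \<partial>G_pmf p)"
    unfolding G_pmf_def by (rule nn_integral_map_pmf[symmetric])
  finally show ?thesis by (simp add: add.commute)
qed

lemma measurable_Suc_head: "(\<lambda>G. G(0 := Suc (G 0))) \<in> measurable (G_space p) (G_space p)"
proof -
  have "(\<lambda>G. G(0 := Suc (G 0))) = (\<lambda>G. case_nat (Suc (G 0)) (\<lambda>j. G (Suc j)))"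
    by (auto simp: fun_eq_iff split: nat.split)
  also have "\<dots> \<in> measurable (G_space p) (G_space p)"
    unfolding G_space_def
    by (intro measurable_case_nat' measurable_compose[OF measurable_component_singleton]
        measurable_PiM_single') (auto simp: space_PiM)
  finally show ?thesis .
qed

lemma measurable_cons_one: "case_nat 1 \<in> measurable (G_space p) (G_space p)"
  unfolding G_space_def by (intro measurable_case_nat' measurable_const measurable_ident_sets) auto

lemma nn_integral_G_space_split:
  assumes p: "0 \<le> p" "p < 1" and g[measurable]: "g \<in> borel_measurable (G_space p)"
  shows "(\<integral>\<^sup>+G. g G \<partial>G_space p) =
    ennreal p * (\<integral>\<^sup>+G. g (G(0 := Suc (G 0))) \<partial>G_space p)
      + ennreal (1 - p) * (\<integral>\<^sup>+G. g (case_nat 1 G) \<partial>G_space p)"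
proof -
  interpret sequence_space "measure_pmf (G_pmf p)" by (rule sequence_space_G_pmf)
  have S: "S = G_space p" unfolding G_space_def ..
  have "(\<lambda>x. case_nat (Suc (snd x)) (fst x)) \<in> measurable (S \<Otimes>\<^sub>M measure_pmf (G_pmf p)) S"
    by (intro measurable_case_nat' measurable_fst) (rule measurable_compose[OF measurable_snd], simp)
  from measurable_compose[OF this, of g]
  have head_measurable:
    "(\<lambda>(G, s). g (case_nat (Suc s) G)) \<in> borel_measurable (S \<Otimes>\<^sub>M measure_pmf (G_pmf p))"
    by (simp add: S case_prod_beta')
  have Suc_head: "(case_nat s G)(0 := Suc s) = case_nat (Suc s) G" for s G
    by (auto simp: fun_eq_iff split: nat.split)
  have "(\<integral>\<^sup>+G. g G \<partial>S) = (\<integral>\<^sup>+G. \<integral>\<^sup>+s. g (case_nat s G) \<partial>G_pmf p \<partial>S)"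
    by (rule nn_integral_split_head) (simp add: S)
  also have "\<dots> = (\<integral>\<^sup>+G. ennreal p * (\<integral>\<^sup>+s. g (case_nat (Suc s) G) \<partial>G_pmf p)
      + ennreal (1 - p) * g (case_nat 1 G) \<partial>S)"
    using p by (intro nn_integral_cong nn_integral_G_pmf)
  also have "\<dots> = ennreal p * (\<integral>\<^sup>+G. \<integral>\<^sup>+s. g (case_nat (Suc s) G) \<partial>G_pmf p \<partial>S)
      + ennreal (1 - p) * (\<integral>\<^sup>+G. g (case_nat 1 G) \<partial>S)"
    using measurable_compose[OF measurable_cons_one g]
      sigma_finite_measure.borel_measurable_nn_integral[OF
        prob_space_imp_sigma_finite[OF measure_pmf.prob_space_axioms] head_measurable]
    by (simp add: S nn_integral_add nn_integral_cmult)
  also have "(\<integral>\<^sup>+G. \<integral>\<^sup>+s. g (case_nat (Suc s) G) \<partial>G_pmf p \<partial>S) = (\<integral>\<^sup>+G. g (G(0 := Suc (G 0))) \<partial>S)"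
    using nn_integral_split_head[of "\<lambda>G. g (G(0 := Suc (G 0)))"]
      measurable_compose[OF measurable_Suc_head g]
    by (simp add: S Suc_head)
  finally show ?thesis unfolding S .
qed

lemma integral_G_space_split:
  assumes p: "0 \<le> p" "p < 1" and g: "g \<in> borel_measurable (G_space p)"
    and bounded: "\<And>G. \<forall>i. 0 < G i \<Longrightarrow> 0 \<le> g G \<and> g G \<le> 1"
  shows "(\<integral>G. g G \<partial>G_space p) =
    p * (\<integral>G. g (G(0 := Suc (G 0))) \<partial>G_space p) + (1 - p) * (\<integral>G. g (case_nat 1 G) \<partial>G_space p)"
proof -
  interpret prob_space "G_space p" by (rule prob_space_G_space)
  have pos: "\<forall>i. 0 < (G(0 := Suc (G 0))) i" "\<forall>i. 0 < case_nat 1 G i" if "\<forall>i. 0 < G i" for G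
    using that by (auto split: nat.split)
  have nn_eq: "(\<integral>\<^sup>+G. ennreal (f G) \<partial>G_space p) = ennreal (\<integral>G. f G \<partial>G_space p)"
    and nonneg: "0 \<le> (\<integral>G. f G \<partial>G_space p)"
    if f: "f \<in> borel_measurable (G_space p)" and "AE G in G_space p. 0 \<le> f G \<and> f G \<le> 1" for f
  proof -
    have "integrable (G_space p) f" using that by (intro integrable_const_bound[where B=1]) auto
    then show "(\<integral>\<^sup>+G. ennreal (f G) \<partial>G_space p) = ennreal (\<integral>G. f G \<partial>G_space p)"
      using that by (intro nn_integral_eq_integral) auto
    show "0 \<le> (\<integral>G. f G \<partial>G_space p)" using that by (intro integral_nonneg_AE) auto
  qed
  note g_Suc_head = measurable_compose[OF measurable_Suc_head g]
  note g_cons_one = measurable_compose[OF measurable_cons_one g]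
  have AE_pos: "AE G in G_space p. P G" if "\<And>G. \<forall>i. 0 < G i \<Longrightarrow> P G" for P
    using AE_G_space_pos by (rule eventually_mono) (rule that)
  have AE_g: "AE G in G_space p. 0 \<le> g G \<and> g G \<le> 1"
    by (rule AE_pos) (rule bounded)
  have AE_g_Suc_head: "AE G in G_space p. 0 \<le> g (G(0 := Suc (G 0))) \<and> g (G(0 := Suc (G 0))) \<le> 1"
    by (rule AE_pos) (rule bounded[OF pos(1)])
  have AE_g_cons_one: "AE G in G_space p. 0 \<le> g (case_nat 1 G) \<and> g (case_nat 1 G) \<le> 1"
    by (rule AE_pos) (rule bounded[OF pos(2)])
  have "ennreal (\<integral>G. g G \<partial>G_space p) = ennreal p * ennreal (\<integral>G. g (G(0 := Suc (G 0))) \<partial>G_space p)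
      + ennreal (1 - p) * ennreal (\<integral>G. g (case_nat 1 G) \<partial>G_space p)"
    using nn_integral_G_space_split[OF p measurable_compose[OF g measurable_ennreal]]
    unfolding nn_eq[OF g AE_g] nn_eq[OF g_Suc_head AE_g_Suc_head] nn_eq[OF g_cons_one AE_g_cons_one] .
  then show ?thesis
    using p nonneg[OF g_Suc_head AE_g_Suc_head] nonneg[OF g_cons_one AE_g_cons_one] nonneg[OF g AE_g]
    by (simp add: ennreal_mult[symmetric] ennreal_plus[symmetric] del: ennreal_plus)
qed

lemma borel_measurable_Theta_inf: "(\<lambda>G. Theta_inf G u) \<in> borel_measurable (G_space p)"
proof (cases "u = 0 \<or> u = 1")
  case True
  then show ?thesis by (auto simp: Theta_inf_def)
next
  case False
  then have "(\<lambda>G. Theta_inf G u) = (\<lambda>G. \<Sum>k. (\<Prod>i\<le>k. u ^ G i) * ((1 - u) / u) ^ k)"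
    by (auto simp: Theta_inf_def T_seq_def power_sum)
  moreover have "(\<lambda>G. u ^ G i) \<in> borel_measurable (G_space p)" for i
    unfolding G_space_def by (rule measurable_compose[OF measurable_component_singleton]) auto
  ultimately show ?thesis by simp
qed

definition Theta_prod :: "nat \<Rightarrow> (nat \<Rightarrow> real) \<Rightarrow> (nat \<Rightarrow> nat) \<Rightarrow> real" where
  "Theta_prod N u G = (\<Prod>n<N. Theta_inf G (u n))"

lemma Theta_prod_bounds:
  assumes "\<forall>i. 0 < G i" "\<forall>n<N. 0 \<le> u n \<and> u n \<le> 1"
  shows "0 \<le> Theta_prod N u G \<and> Theta_prod N u G \<le> 1"
  using Theta_inf_bounds[OF assms(1)] assms(2) unfolding Theta_prod_def
  by (auto intro!: prod_nonneg prod_le_1)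

lemma borel_measurable_Theta_prod: "Theta_prod N u \<in> borel_measurable (G_space p)"
  unfolding Theta_prod_def[abs_def] using borel_measurable_Theta_inf by measurable

lemma integrable_Theta_prod:
  assumes "\<forall>n<N. 0 \<le> u n \<and> u n \<le> 1"
  shows "integrable (G_space p) (Theta_prod N u)"
proof -
  interpret prob_space "G_space p" by (rule prob_space_G_space)
  have "AE G in G_space p. norm (Theta_prod N u G) \<le> 1"
    using AE_G_space_pos by (rule eventually_mono) (use Theta_prod_bounds assms in fastforce)
  then show ?thesis by (intro integrable_const_bound borel_measurable_Theta_prod)
qed

lemma Theta_prod_Suc_head:
  assumes G: "\<forall>i. 0 < G i" and u: "\<forall>n<N. 0 \<le> u n \<and> u n \<le> 1"
  shows "Theta_prod N u (G(0 := Suc (G 0))) = (\<Prod>n<N. u n) * Theta_prod N u G"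
  using u Theta_inf_Suc_head[OF G] unfolding Theta_prod_def by (simp add: prod.distrib)

lemma Theta_prod_cons_one:
  assumes G: "\<forall>i. 0 < G i" and u: "\<forall>n<N. 0 \<le> u n \<and> u n \<le> 1"
  shows "Theta_prod N u (case_nat 1 G)
    = (\<Sum>S\<in>Pow {..<N}. min_step_weight N u S * Theta_prod N (ones_outside S u) G)"
proof -
  have "Theta_prod N u (case_nat 1 G) = (\<Prod>n<N. u n + (1 - u n) * Theta_inf G (u n))"
    unfolding Theta_prod_def using u Theta_inf_cons_one[OF G] by (intro prod.cong) auto
  moreover have "ones_outside S (\<lambda>n. Theta_inf G (u n)) = (\<lambda>n. Theta_inf G (ones_outside S u n))" for S
    by (simp add: ones_outside_def fun_eq_iff Theta_inf_def)
  ultimately show ?thesis unfolding prod_min_step_expand Theta_prod_def by simp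
qed

lemma integral_Theta_prod:
  assumes p: "0 \<le> p" "p < 1" and u: "\<forall>n<N. 0 \<le> u n \<and> u n \<le> 1"
  shows "(\<integral>G. Theta_prod N u G \<partial>G_space p) = p * (\<Prod>n<N. u n) * (\<integral>G. Theta_prod N u G \<partial>G_space p)
    + (1 - p) * (\<Sum>S\<in>Pow {..<N}.
        min_step_weight N u S * (\<integral>G. Theta_prod N (ones_outside S u) G \<partial>G_space p))"
proof -
  note measurable = borel_measurable_Theta_prod[of N _ p]
  have "(\<integral>G. Theta_prod N u G \<partial>G_space p) = p * (\<integral>G. Theta_prod N u (G(0 := Suc (G 0))) \<partial>G_space p)
      + (1 - p) * (\<integral>G. Theta_prod N u (case_nat 1 G) \<partial>G_space p)"
    using p measurable Theta_prod_bounds[OF _ u] by (intro integral_G_space_split) auto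
  also have "(\<integral>G. Theta_prod N u (G(0 := Suc (G 0))) \<partial>G_space p)
      = (\<Prod>n<N. u n) * (\<integral>G. Theta_prod N u G \<partial>G_space p)"
    unfolding integral_mult_right_zero[symmetric]
  proof (rule integral_cong_AE)
    show "(\<lambda>G. Theta_prod N u (G(0 := Suc (G 0)))) \<in> borel_measurable (G_space p)"
      by (rule measurable_compose[OF measurable_Suc_head measurable])
    show "(\<lambda>G. (\<Prod>n<N. u n) * Theta_prod N u G) \<in> borel_measurable (G_space p)"
      by (rule borel_measurable_times[OF borel_measurable_const measurable])
    show "AE G in G_space p. Theta_prod N u (G(0 := Suc (G 0))) = (\<Prod>n<N. u n) * Theta_prod N u G"
      using AE_G_space_pos by (rule eventually_mono) (rule Theta_prod_Suc_head[OF _ u])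
  qed
  also have "(\<integral>G. Theta_prod N u (case_nat 1 G) \<partial>G_space p)
      = (\<integral>G. (\<Sum>S\<in>Pow {..<N}. min_step_weight N u S * Theta_prod N (ones_outside S u) G) \<partial>G_space p)"
  proof (rule integral_cong_AE)
    show "(\<lambda>G. Theta_prod N u (case_nat 1 G)) \<in> borel_measurable (G_space p)"
      by (rule measurable_compose[OF measurable_cons_one measurable])
    show "(\<lambda>G. \<Sum>S\<in>Pow {..<N}. min_step_weight N u S * Theta_prod N (ones_outside S u) G)
        \<in> borel_measurable (G_space p)"
      by (rule borel_measurable_sum, rule borel_measurable_times[OF borel_measurable_const measurable])
    show "AE G in G_space p. Theta_prod N u (case_nat 1 G)
        = (\<Sum>S\<in>Pow {..<N}. min_step_weight N u S * Theta_prod N (ones_outside S u) G)"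
      using AE_G_space_pos by (rule eventually_mono) (rule Theta_prod_cons_one[OF _ u])
  qed
  also have "\<dots> = (\<Sum>S\<in>Pow {..<N}.
      min_step_weight N u S * (\<integral>G. Theta_prod N (ones_outside S u) G \<partial>G_space p))"
    using u
    by (subst Bochner_Integration.integral_sum)
       (auto intro!: Bochner_Integration.integrable_mult_right integrable_Theta_prod
         simp: ones_outside_def)
  finally have "(\<integral>G. Theta_prod N u G \<partial>G_space p)
      = p * ((\<Prod>n<N. u n) * (\<integral>G. Theta_prod N u G \<partial>G_space p))
      + (1 - p) * (\<Sum>S\<in>Pow {..<N}.
          min_step_weight N u S * (\<integral>G. Theta_prod N (ones_outside S u) G \<partial>G_space p))" .
  then show ?thesis by (simp only: mult.assoc)
qed

lemma orthant_equation_Theta_prod: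
  assumes p: "0 \<le> p" "p < 1"
  shows "orthant_equation p N (\<lambda>u. \<integral>G. Theta_prod N u G \<partial>G_space p)"
  unfolding orthant_equation_def
proof (intro conjI allI impI)
  fix u v :: "nat \<Rightarrow> real"
  assume "\<forall>n<N. u n = v n"
  then show "(\<integral>G. Theta_prod N u G \<partial>G_space p) = (\<integral>G. Theta_prod N v G \<partial>G_space p)"
    unfolding Theta_prod_def by (intro Bochner_Integration.integral_cong) auto
next
  fix u :: "nat \<Rightarrow> real"
  assume "\<forall>n<N. u n = 1"
  then have "Theta_prod N u = (\<lambda>G. 1)" unfolding Theta_prod_def by (auto simp: Theta_inf_def fun_eq_iff)
  then show "(\<integral>G. Theta_prod N u G \<partial>G_space p) = 1"
    by (simp add: prob_space.prob_space[OF prob_space_G_space])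
qed (rule integral_Theta_prod[OF p])

section \<open>Existence by coupling from the past\<close>

definition clamp01 :: "real \<Rightarrow> real" where
  "clamp01 x = max 0 (min 1 x)"

definition chain_step :: "bool \<times> (nat \<Rightarrow> real) \<Rightarrow> (nat \<Rightarrow> real) \<Rightarrow> nat \<Rightarrow> real" where
  "chain_step s \<eta> = (\<lambda>n. step_coord (fst s) (\<eta> n) (clamp01 (snd s n)))"

definition step_noise :: "real \<Rightarrow> (bool \<times> (nat \<Rightarrow> real)) measure" where
  "step_noise p = measure_pmf (bernoulli_pmf p) \<Otimes>\<^sub>M unif_seq"

lemma prob_space_unif_seq: "prob_space unif_seq"
  unfolding unif_seq_eq_PiM_uniform01 by (rule prob_space_PiM) (rule prob_space_uniform01)

lemma prob_space_step_noise: "prob_space (step_noise p)"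
  unfolding step_noise_def
  by (rule prob_space_pair[OF measure_pmf.prob_space_axioms prob_space_unif_seq])

lemma borel_measurable_state_space_coord[measurable]: "(\<lambda>\<eta>. \<eta> n) \<in> borel_measurable state_space"
proof -
  have "(\<lambda>\<eta>. \<eta> n) \<in> measurable state_space (restrict_space borel {0..1::real})"
    unfolding state_space_def by (rule measurable_component_singleton) simp
  moreover have "(\<lambda>x. x) \<in> measurable (restrict_space borel {0..1::real}) borel"
    by (rule measurable_restrict_space1) (rule measurable_ident_sets[OF refl])
  ultimately show ?thesis by (rule measurable_compose)
qed

lemma borel_measurable_unif_seq_coord[measurable]: "(\<lambda>U. U n) \<in> borel_measurable unif_seq"
proof -
  have "(\<lambda>U. U n) \<in> measurable unif_seq uniform01"
    unfolding unif_seq_eq_PiM_uniform01 by (rule measurable_component_singleton) simp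
  moreover have "(\<lambda>x. x) \<in> measurable uniform01 borel"
    by (rule measurable_ident_sets) (simp add: uniform01_def)
  ultimately show ?thesis by (rule measurable_compose)
qed

lemma measurable_chain_step:
  "(\<lambda>(\<eta>, s). chain_step s \<eta>) \<in> measurable (state_space \<Otimes>\<^sub>M step_noise p) state_space"
proof -
  have "(\<lambda>x. step_coord (fst (snd x)) (fst x n) (clamp01 (snd (snd x) n)))
      \<in> borel_measurable (state_space \<Otimes>\<^sub>M step_noise p)" for n
    unfolding step_coord_def clamp01_def step_noise_def by measurable
  then show ?thesis
    unfolding state_space_def chain_step_def case_prod_beta
    by (intro measurable_PiM_single' measurable_restrict_space2)
       (auto simp: space_pair_measure space_state_space step_coord_def clamp01_def
         state_space_def[symmetric])
qed

lemma chain_step_unit: "0 \<le> chain_step s \<eta> n \<and> chain_step s \<eta> n \<le> 1" if "0 \<le> \<eta> n" "\<eta> n \<le> 1"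
  using that unfolding chain_step_def step_coord_def clamp01_def by auto

lemma chain_step_mono:
  assumes "\<And>n. \<eta> n \<le> \<eta>' n"
  shows "chain_step s \<eta> n \<le> chain_step s \<eta>' n"
  using assms[of n] unfolding chain_step_def step_coord_def
  by (auto simp: le_max_iff_disj min_le_iff_disj)

text \<open>Coupling from the past: \<open>backward_iterate m \<omega>\<close> starts the chain in the state \<open>0\<close> at time
  \<open>-m\<close> and applies the updates \<open>\<omega> (m - 1), \<dots>, \<omega> 0\<close>, so that \<open>\<omega> 0\<close> is the most recent one.\<close>
fun backward_iterate :: "nat \<Rightarrow> (nat \<Rightarrow> bool \<times> (nat \<Rightarrow> real)) \<Rightarrow> nat \<Rightarrow> real" where
  "backward_iterate 0 \<omega> = (\<lambda>n. 0)"
| "backward_iterate (Suc m) \<omega> = chain_step (\<omega> 0) (backward_iterate m (\<lambda>j. \<omega> (Suc j)))"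

lemma backward_iterate_unit: "0 \<le> backward_iterate m \<omega> n \<and> backward_iterate m \<omega> n \<le> 1"
  by (induction m arbitrary: \<omega>) (simp_all add: chain_step_unit)

lemma incseq_backward_iterate: "incseq (\<lambda>m. backward_iterate m \<omega> n)"
proof (rule incseq_SucI)
  show "backward_iterate m \<omega> n \<le> backward_iterate (Suc m) \<omega> n" for m
  proof (induction m arbitrary: \<omega> n)
    case 0
    then show ?case using backward_iterate_unit[of "Suc 0" \<omega> n] by simp
  next
    case (Suc m)
    then show ?case by (simp only: backward_iterate.simps(2)) (rule chain_step_mono)
  qed
qed

definition cftp_limit :: "(nat \<Rightarrow> bool \<times> (nat \<Rightarrow> real)) \<Rightarrow> nat \<Rightarrow> real" where
  "cftp_limit \<omega> = (\<lambda>n. SUP m. backward_iterate m \<omega> n)"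

lemma backward_iterate_tendsto: "(\<lambda>m. backward_iterate m \<omega> n) \<longlonglongrightarrow> cftp_limit \<omega> n"
  unfolding cftp_limit_def using backward_iterate_unit
  by (intro LIMSEQ_incseq_SUP incseq_backward_iterate) (auto intro: bdd_aboveI[where M=1])

lemma cftp_limit_in_space: "cftp_limit \<omega> \<in> space state_space"
proof -
  have "0 \<le> cftp_limit \<omega> n \<and> cftp_limit \<omega> n \<le> 1" for n
    using backward_iterate_unit
    by (intro conjI LIMSEQ_le_const[OF backward_iterate_tendsto]
        LIMSEQ_le_const2[OF backward_iterate_tendsto]) auto
  then show ?thesis unfolding space_state_space by auto
qed

lemma cftp_limit_case_nat: "cftp_limit (case_nat s \<omega>) = chain_step s (cftp_limit \<omega>)"
proof
  fix n
  have "(\<lambda>m. backward_iterate (Suc m) (case_nat s \<omega>) n) \<longlonglongrightarrow> cftp_limit (case_nat s \<omega>) n"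
    using LIMSEQ_Suc[OF backward_iterate_tendsto] .
  moreover have "(\<lambda>m. backward_iterate (Suc m) (case_nat s \<omega>) n) \<longlonglongrightarrow> chain_step s (cftp_limit \<omega>) n"
    unfolding backward_iterate.simps(2) chain_step_def step_coord_def
    using backward_iterate_tendsto[of \<omega> n] by (auto intro!: tendsto_max tendsto_min)
  ultimately show "cftp_limit (case_nat s \<omega>) n = chain_step s (cftp_limit \<omega>) n"
    by (rule LIMSEQ_unique)
qed

definition noise_seq :: "real \<Rightarrow> (nat \<Rightarrow> bool \<times> (nat \<Rightarrow> real)) measure" where
  "noise_seq p = (\<Pi>\<^sub>M i\<in>UNIV. step_noise p)"

lemma sequence_space_step_noise: "sequence_space (step_noise p)"
  by (simp add: sequence_space_def product_prob_space_def product_sigma_finite_def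
      prob_space_imp_sigma_finite prob_space_step_noise product_prob_space_axioms_def)

lemma measurable_noise_seq_shift: "(\<lambda>\<omega> j. \<omega> (Suc j)) \<in> measurable (noise_seq p) (noise_seq p)"
  unfolding noise_seq_def by (rule measurable_PiM_single') (auto simp: space_PiM)

lemma measurable_backward_iterate: "backward_iterate m \<in> measurable (noise_seq p) state_space"
proof (induction m)
  case 0
  have "(\<lambda>n. 0) \<in> space state_space" unfolding space_state_space by simp
  then show ?case by (simp add: measurable_const)
next
  case (Suc m)
  have "(\<lambda>\<omega>. (backward_iterate m (\<lambda>j. \<omega> (Suc j)), \<omega> 0))
      \<in> measurable (noise_seq p) (state_space \<Otimes>\<^sub>M step_noise p)"
    using measurable_compose[OF measurable_noise_seq_shift Suc.IH]
    by (intro measurable_Pair) (simp_all add: noise_seq_def)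
  from measurable_compose[OF this measurable_chain_step] show ?case
    by (simp add: fun_eq_iff)
qed

lemma measurable_cftp_limit: "cftp_limit \<in> measurable (noise_seq p) state_space"
  unfolding state_space_def
proof (rule measurable_PiM_single')
  show "(\<lambda>\<omega>. cftp_limit \<omega> n) \<in> measurable (noise_seq p) (restrict_space borel {0..1})" for n
    using cftp_limit_in_space
    by (intro measurable_restrict_space2 borel_measurable_LIMSEQ_real[OF backward_iterate_tendsto]
        measurable_compose[OF measurable_backward_iterate borel_measurable_state_space_coord])
       (auto simp: space_state_space)
  show "cftp_limit \<in> space (noise_seq p) \<rightarrow> (\<Pi>\<^sub>E n\<in>UNIV. space (restrict_space borel {0..1::real}))"
    using cftp_limit_in_space by (auto simp: space_state_space space_restrict_space)
qed

lemma step_coord_clamp01: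
  assumes "0 \<le> a" "a \<le> 1" "0 \<le> step_coord b a x" "step_coord b a x \<le> 1"
  shows "step_coord b a (clamp01 x) = step_coord b a x"
  using assms unfolding step_coord_def clamp01_def by (cases b) auto

lemma measurable_chain_step_at:
  assumes "\<eta> \<in> space state_space"
  shows "(\<lambda>s. chain_step s \<eta>) \<in> measurable (step_noise p) state_space"
proof -
  have "(\<lambda>s. (\<eta>, s)) \<in> measurable (step_noise p) (state_space \<Otimes>\<^sub>M step_noise p)"
    using assms by (intro measurable_Pair measurable_const) auto
  from measurable_compose[OF this measurable_chain_step] show ?thesis by simp
qed

lemma measurable_chain_step_uniforms:
  assumes "\<eta> \<in> space state_space"
  shows "(\<lambda>U. chain_step (b, U) \<eta>) \<in> measurable unif_seq state_space"
proof -
  have "(\<lambda>U. (b, U)) \<in> measurable unif_seq (step_noise p)" for p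
    unfolding step_noise_def by (intro measurable_Pair measurable_const) auto
  from measurable_compose[OF this measurable_chain_step_at[OF assms]] show ?thesis .
qed

text \<open>The clamping in \<open>chain_step\<close> changes nothing as long as the unclamped step stays in the
  state space, and the unclamped step leaves it only on a null set.\<close>
lemma sets_step_coord_preimage:
  assumes \<eta>: "\<eta> \<in> space state_space" and A: "A \<in> sets state_space"
  shows "{U \<in> space unif_seq. (\<lambda>n. step_coord b (\<eta> n) (U n)) \<in> A} \<in> sets unif_seq"
proof -
  define raw where "raw U = (\<lambda>n. step_coord b (\<eta> n) (U n))" for U
  have raw_eq: "chain_step (b, U) \<eta> = raw U" if "raw U \<in> space state_space" for U
    using that \<eta> step_coord_clamp01
    unfolding raw_def chain_step_def space_state_space by (auto simp: fun_eq_iff)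
  have "{U \<in> space unif_seq. raw U \<in> A}
      = {U \<in> space unif_seq. raw U \<in> space state_space}
        \<inter> ((\<lambda>U. chain_step (b, U) \<eta>) -` A \<inter> space unif_seq)"
  proof (intro equalityI subsetI)
    fix U assume "U \<in> {U \<in> space unif_seq. raw U \<in> A}"
    moreover from this have "raw U \<in> space state_space" using sets.sets_into_space[OF A] by blast
    ultimately show "U \<in> {U \<in> space unif_seq. raw U \<in> space state_space}
        \<inter> ((\<lambda>U. chain_step (b, U) \<eta>) -` A \<inter> space unif_seq)"
      using raw_eq by simp
  next
    fix U assume "U \<in> {U \<in> space unif_seq. raw U \<in> space state_space}
        \<inter> ((\<lambda>U. chain_step (b, U) \<eta>) -` A \<inter> space unif_seq)"
    then have "U \<in> space unif_seq" "raw U \<in> space state_space" "chain_step (b, U) \<eta> \<in> A" by auto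
    then show "U \<in> {U \<in> space unif_seq. raw U \<in> A}" using raw_eq[of U] by simp
  qed
  also have "\<dots> \<in> sets unif_seq"
  proof (rule sets.Int)
    have "{U \<in> space unif_seq. raw U \<in> space state_space}
        = {U \<in> space unif_seq. \<forall>n. 0 \<le> step_coord b (\<eta> n) (U n) \<and> step_coord b (\<eta> n) (U n) \<le> 1}"
      unfolding raw_def space_state_space by simp
    also have "\<dots> \<in> sets unif_seq"
      unfolding step_coord_def by measurable
    finally show "{U \<in> space unif_seq. raw U \<in> space state_space} \<in> sets unif_seq" .
    show "(\<lambda>U. chain_step (b, U) \<eta>) -` A \<inter> space unif_seq \<in> sets unif_seq"
      by (rule measurable_sets[OF measurable_chain_step_uniforms[OF \<eta>] A])
  qed
  finally show ?thesis unfolding raw_def .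
qed

lemma nn_integral_unif_seq_chain_step:
  assumes \<eta>: "\<eta> \<in> space state_space" and A: "A \<in> sets state_space"
  shows "(\<integral>\<^sup>+U. indicator A (chain_step (b, U) \<eta>) \<partial>unif_seq)
    = emeasure unif_seq {U \<in> space unif_seq. (\<lambda>n. step_coord b (\<eta> n) (U n)) \<in> A}"
proof -
  note preimage_sets = measurable_sets[OF measurable_chain_step_uniforms[OF \<eta>] A]
  have "(\<integral>\<^sup>+U. indicator A (chain_step (b, U) \<eta>) \<partial>unif_seq)
      = (\<integral>\<^sup>+U. indicator ((\<lambda>U. chain_step (b, U) \<eta>) -` A \<inter> space unif_seq) U \<partial>unif_seq)"
    by (intro nn_integral_cong) (simp add: indicator_def)
  also have "\<dots> = emeasure unif_seq ((\<lambda>U. chain_step (b, U) \<eta>) -` A \<inter> space unif_seq)"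
    using preimage_sets by (rule nn_integral_indicator)
  also have "\<dots> = emeasure unif_seq {U \<in> space unif_seq. (\<lambda>n. step_coord b (\<eta> n) (U n)) \<in> A}"
  proof (rule emeasure_eq_AE)
    show "AE U in unif_seq. (U \<in> (\<lambda>U. chain_step (b, U) \<eta>) -` A \<inter> space unif_seq)
        = (U \<in> {U \<in> space unif_seq. (\<lambda>n. step_coord b (\<eta> n) (U n)) \<in> A})"
      using AE_unif_seq_unit_interval
    proof eventually_elim
      case (elim U)
      then have "chain_step (b, U) \<eta> = (\<lambda>n. step_coord b (\<eta> n) (U n))"
        unfolding chain_step_def clamp01_def by (simp add: fun_eq_iff)
      then show ?case by auto
    qed
  qed (use preimage_sets sets_step_coord_preimage[OF \<eta> A] in auto)
  finally show ?thesis .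
qed

lemma trans_prob_eq_nn_integral_step_noise:
  assumes \<eta>: "\<eta> \<in> space state_space" and A: "A \<in> sets state_space" and p: "0 \<le> p" "p \<le> 1"
  shows "trans_prob p \<eta> A = (\<integral>\<^sup>+s. indicator A (chain_step s \<eta>) \<partial>step_noise p)"
proof -
  have "(\<lambda>s. indicator A (chain_step s \<eta>) :: ennreal) \<in> borel_measurable (step_noise p)"
    using measurable_chain_step_at[OF \<eta>] A by simp
  then have "(\<integral>\<^sup>+s. indicator A (chain_step s \<eta>) \<partial>step_noise p)
      = (\<integral>\<^sup>+b. \<integral>\<^sup>+U. indicator A (chain_step (b, U) \<eta>) \<partial>unif_seq \<partial>bernoulli_pmf p)"
    unfolding step_noise_def
    by (subst sigma_finite_measure.nn_integral_fst[symmetric])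
       (auto intro: prob_space_imp_sigma_finite prob_space_unif_seq simp: case_prod_beta')
  also have "\<dots> = trans_prob p \<eta> A"
    using p unfolding trans_prob_def nn_integral_unif_seq_chain_step[OF \<eta> A]
    by (simp add: nn_integral_bernoulli_pmf step_coord_def mult.commute add.commute)
  finally show ?thesis ..
qed

lemma stationary_cftp_limit:
  assumes p: "0 \<le> p" "p \<le> 1"
  shows "stationary p (distr (noise_seq p) state_space cftp_limit)"
  unfolding stationary_def
proof (intro conjI ballI)
  interpret sequence_space "step_noise p" by (rule sequence_space_step_noise)
  show "prob_space (distr (noise_seq p) state_space cftp_limit)"
    unfolding noise_seq_def by (rule prob_space_distr[OF measurable_cftp_limit[unfolded noise_seq_def]])
  show "sets (distr (noise_seq p) state_space cftp_limit) = sets state_space" by simp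
  fix A
  assume A: "A \<in> sets state_space"
  define K where "K \<eta> = (\<integral>\<^sup>+s. indicator A (chain_step s \<eta>) \<partial>step_noise p)" for \<eta>
  have "(\<lambda>(\<eta>, s). indicator A (chain_step s \<eta>) :: ennreal)
      \<in> borel_measurable (state_space \<Otimes>\<^sub>M step_noise p)"
    using measurable_compose[OF measurable_chain_step borel_measurable_indicator[OF A]]
    by (simp add: case_prod_beta')
  then have K_measurable: "K \<in> borel_measurable state_space"
    unfolding K_def using prob_space_imp_sigma_finite[OF prob_space_step_noise]
    by (intro sigma_finite_measure.borel_measurable_nn_integral) auto
  have cftp_measurable: "cftp_limit \<in> measurable S state_space"
    using measurable_cftp_limit unfolding noise_seq_def .
  have "emeasure (distr S state_space cftp_limit) A = (\<integral>\<^sup>+\<omega>. indicator A (cftp_limit \<omega>) \<partial>S)"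
    using A cftp_measurable
    by (simp add: nn_integral_indicator[symmetric] nn_integral_distr del: nn_integral_indicator)
  also have "\<dots> = (\<integral>\<^sup>+\<omega>. \<integral>\<^sup>+s. indicator A (cftp_limit (case_nat s \<omega>)) \<partial>step_noise p \<partial>S)"
    using A cftp_measurable by (intro nn_integral_split_head) simp
  also have "\<dots> = (\<integral>\<^sup>+\<omega>. K (cftp_limit \<omega>) \<partial>S)"
    unfolding K_def cftp_limit_case_nat ..
  also have "\<dots> = (\<integral>\<^sup>+\<eta>. K \<eta> \<partial>distr S state_space cftp_limit)"
    using K_measurable cftp_measurable by (simp add: nn_integral_distr)
  also have "\<dots> = (\<integral>\<^sup>+\<eta>. trans_prob p \<eta> A \<partial>distr S state_space cftp_limit)"
    using A p by (intro nn_integral_cong) (simp add: K_def trans_prob_eq_nn_integral_step_noise)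
  finally show "emeasure (distr (noise_seq p) state_space cftp_limit) A
      = (\<integral>\<^sup>+\<eta>. trans_prob p \<eta> A \<partial>distr (noise_seq p) state_space cftp_limit)"
    unfolding noise_seq_def .
qed

theorem corollary1:
  fixes p :: real
  assumes "0 < p" and "p < 1"
  shows "(\<exists>!\<pi>. stationary p \<pi>) \<and>
         (\<forall>\<pi>. stationary p \<pi> \<longrightarrow>
            (\<forall>(N::nat) (u::nat \<Rightarrow> real). (\<forall>n<N. 0 \<le> u n \<and> u n \<le> 1) \<longrightarrow>
               measure \<pi> {\<eta> \<in> space state_space. \<forall>n<N. 0 \<le> \<eta> n \<and> \<eta> n \<le> u n}
               = (\<integral>G. (\<Prod>n<N. Theta_inf G (u n)) \<partial>G_space p)))"
proof -
  have p: "0 \<le> p" "p \<le> 1" using assms by simp_all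
  have formula: "measure \<pi> (orthant N u) = (\<integral>G. (\<Prod>n<N. Theta_inf G (u n)) \<partial>G_space p)"
    if "stationary p \<pi>" "\<forall>n<N. 0 \<le> u n \<and> u n \<le> 1" for \<pi> N u
    using orthant_equation_unique[OF assms stationary_orthant_equation[OF that(1) p]
        orthant_equation_Theta_prod[OF p(1) assms(2)] that(2)]
    unfolding Theta_prod_def .
  have unique: "\<pi>1 = \<pi>2" if "stationary p \<pi>1" "stationary p \<pi>2" for \<pi>1 \<pi>2
    using that by (intro measure_eqI_unit_orthants) (auto simp: stationary_def formula)
  show ?thesis
    using stationary_cftp_limit[OF p] unique formula unfolding orthant_def by blast
qed

end
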